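(* Let $G$ be a splittable query graph and $C_1,C_2\in\mathrm{Eq}$ with $C_1\ne C_2$. Then (1) either $C_1\notin coupled^+(C_2)$ or $C_2\notin coupled^+(C_1)$; and (2) if $C_1\in coupled^+(C_2)$, then $coupled^+(C_1)\subsetneq coupled^+(C_2)$.
   Context: $G=G[Q]$ is the query graph of a Boolean CQ without self-joins with atoms $R(u,v)$, $u\ne v$, first attribute the key: vertices are variables, each atom gives an edge $e_R=(u_R,v_R)$, consistent/inconsistent according to the type of $R$; $E^i$ = inconsistent edges. Paths may have zero edges; $x\leadsto y$ denotes a directed path, undirected paths ignore directions; for a path $P$ and vertex set $N$, $P\cap N$ is the set of vertices of $P$ (endpoints included) in $N$. $u^+=\{v:u\leadsto v\}$, $u^{+,R}=\{v: u\leadsto v$ in $G-\{e_R\}\}$. For $R,S\in E^i$: $R\sim S$ iff $u_S\in u_R^+$ and $u_R\in u_S^+$; $[R]$ the class of $R$; $coupled^+(R)=[R]\cup\{S\in E^i:\exists$ undirected path $P$ from $v_R$ to $u_S$ with $P\cap u_R^{+,R}=\emptyset\}$; $G$ is splittable if there are no $R,S\in E^i$ with $R\in coupled^+(S)$, $S\in coupled^+(R)$ and $R\not\sim S$. $\mathrm{Eq}$ is the set of $\sim$-classes of $E^i$. For $C\in\mathrm{Eq}$, $C^+=\bigcap_{R\in C}u_R^{+,R}$ and $coupled^+(C)=\{C\}\cup\{C'\in\mathrm{Eq}:\exists R\in C,S\in C'$ and an undirected path $P$ from $v_R$ to $u_S$ with $P\cap C^+=\emptyset\}$. *)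

theory Defs
  imports Main
begin

text \<open>A query graph of a Boolean CQ without self-joins with binary atoms R(u,v):
  atoms are given by a set At of relation names; atom R yields the directed edge
  (u R, v R); Inc \<subseteq> At is the set of inconsistent atoms (edges E^i).\<close>

definition query_graph :: "'r set \<Rightarrow> ('r \<Rightarrow> 'v) \<Rightarrow> ('r \<Rightarrow> 'v) \<Rightarrow> 'r set \<Rightarrow> bool" where
  "query_graph At u v Inc \<longleftrightarrow> finite At \<and> Inc \<subseteq> At \<and> (\<forall>R\<in>At. u R \<noteq> v R)"

definition dedges :: "'r set \<Rightarrow> ('r \<Rightarrow> 'v) \<Rightarrow> ('r \<Rightarrow> 'v) \<Rightarrow> ('v \<times> 'v) set" where
  "dedges At u v = {(u S, v S) | S. S \<in> At}"

definition reach :: "'r set \<Rightarrow> ('r \<Rightarrow> 'v) \<Rightarrow> ('r \<Rightarrow> 'v) \<Rightarrow> 'v \<Rightarrow> 'v set" where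
  "reach At u v x = {y. (x, y) \<in> (dedges At u v)\<^sup>*}"

text \<open>u_R^{+,R}: reachable from u_R in G - {e_R}.\<close>
definition reachR :: "'r set \<Rightarrow> ('r \<Rightarrow> 'v) \<Rightarrow> ('r \<Rightarrow> 'v) \<Rightarrow> 'r \<Rightarrow> 'v set" where
  "reachR At u v R = reach (At - {R}) u v (u R)"

definition upath :: "'r set \<Rightarrow> ('r \<Rightarrow> 'v) \<Rightarrow> ('r \<Rightarrow> 'v) \<Rightarrow> 'v list \<Rightarrow> 'v \<Rightarrow> 'v \<Rightarrow> bool" where
  "upath At u v P x y \<longleftrightarrow> P \<noteq> [] \<and> hd P = x \<and> last P = y \<and>
     (\<forall>i. Suc i < length P \<longrightarrow> (\<exists>S\<in>At. {P ! i, P ! Suc i} = {u S, v S}))"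

definition sim :: "'r set \<Rightarrow> ('r \<Rightarrow> 'v) \<Rightarrow> ('r \<Rightarrow> 'v) \<Rightarrow> 'r \<Rightarrow> 'r \<Rightarrow> bool" where
  "sim At u v R S \<longleftrightarrow> u S \<in> reach At u v (u R) \<and> u R \<in> reach At u v (u S)"

definition eqclass :: "'r set \<Rightarrow> ('r \<Rightarrow> 'v) \<Rightarrow> ('r \<Rightarrow> 'v) \<Rightarrow> 'r set \<Rightarrow> 'r \<Rightarrow> 'r set" where
  "eqclass At u v Inc R = {S \<in> Inc. sim At u v R S}"

definition coupled :: "'r set \<Rightarrow> ('r \<Rightarrow> 'v) \<Rightarrow> ('r \<Rightarrow> 'v) \<Rightarrow> 'r set \<Rightarrow> 'r \<Rightarrow> 'r set" where
  "coupled At u v Inc R = eqclass At u v Inc R \<union>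
     {S \<in> Inc. \<exists>P. upath At u v P (v R) (u S) \<and> set P \<inter> reachR At u v R = {}}"

definition splittable :: "'r set \<Rightarrow> ('r \<Rightarrow> 'v) \<Rightarrow> ('r \<Rightarrow> 'v) \<Rightarrow> 'r set \<Rightarrow> bool" where
  "splittable At u v Inc \<longleftrightarrow> \<not> (\<exists>R\<in>Inc. \<exists>S\<in>Inc. R \<in> coupled At u v Inc S \<and>
      S \<in> coupled At u v Inc R \<and> \<not> sim At u v R S)"

definition Eqs :: "'r set \<Rightarrow> ('r \<Rightarrow> 'v) \<Rightarrow> ('r \<Rightarrow> 'v) \<Rightarrow> 'r set \<Rightarrow> 'r set set" where
  "Eqs At u v Inc = eqclass At u v Inc ` Inc"

definition Cplus :: "'r set \<Rightarrow> ('r \<Rightarrow> 'v) \<Rightarrow> ('r \<Rightarrow> 'v) \<Rightarrow> 'r set \<Rightarrow> 'v set" where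
  "Cplus At u v C = (\<Inter>R\<in>C. reachR At u v R)"

definition coupledC :: "'r set \<Rightarrow> ('r \<Rightarrow> 'v) \<Rightarrow> ('r \<Rightarrow> 'v) \<Rightarrow> 'r set \<Rightarrow> 'r set \<Rightarrow> 'r set set" where
  "coupledC At u v Inc C = {C} \<union> {C' \<in> Eqs At u v Inc. \<exists>R\<in>C. \<exists>S\<in>C'. \<exists>P.
      upath At u v P (v R) (u S) \<and> set P \<inter> Cplus At u v C = {}}"

end

theory Submission
  imports Defs
begin

text \<open>Write \<open>N\<^sub>R\<close> for \<open>u\<^sub>R\<^sup>+\<^sup>,\<^sup>R\<close>. Coupling of classes reduces to coupling of single atoms:
  an undirected path from \<open>v\<^sub>R\<close> avoiding \<open>C\<^sup>+\<close> can be re-rooted at some \<open>v\<^sub>R\<^sub>'\<close>, \<open>R' \<in> C\<close>, so that it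
  avoids \<open>N\<^sub>R\<^sub>'\<close>: the first vertex of the path lying in some \<open>N\<^sub>R\<^sub>1 - C\<^sup>+\<close> misses some \<open>N\<^sub>R\<^sub>'\<close>, yet is
  reachable from \<open>u\<^sub>R\<^sub>'\<close> through \<open>u\<^sub>R\<^sub>1\<close>, so the directed path to it must leave through \<open>e\<^sub>R\<^sub>'\<close> and
  afterwards stays outside \<open>N\<^sub>R\<^sub>'\<close>. Its endpoint can also be moved from \<open>u\<^sub>S\<close> to any \<open>u\<^sub>S\<^sub>'\<close> with
  \<open>S \<sim> S'\<close> along a directed cycle, which cannot meet \<open>N\<^sub>R\<^sub>'\<close> unless \<open>R' \<sim> S\<close>. Hence mutual coupling
  of two classes yields two mutually coupled, inequivalent atoms, contradicting splittability.
  For the strict inclusion, if \<open>R\<^sub>0 \<in> C\<^sub>2\<close> is coupled to \<open>R\<^sub>1 \<in> C\<^sub>1\<close>, every path from \<open>v\<^sub>R\<^sub>1\<close> avoiding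
  \<open>N\<^sub>R\<^sub>1\<close> also avoids \<open>N\<^sub>R\<^sub>0\<close>, since otherwise \<open>R\<^sub>0\<close> would be coupled back to \<open>R\<^sub>1\<close>; prefixing it
  by the path from \<open>v\<^sub>R\<^sub>0\<close> to \<open>u\<^sub>R\<^sub>1\<close> and the edge \<open>e\<^sub>R\<^sub>1\<close> shows that whatever \<open>C\<^sub>1\<close> is coupled
  to, \<open>C\<^sub>2\<close> is coupled to as well.\<close>

subsection \<open>Undirected connectivity avoiding a vertex set\<close>

definition adj_outside :: "'r set \<Rightarrow> ('r \<Rightarrow> 'v) \<Rightarrow> ('r \<Rightarrow> 'v) \<Rightarrow> 'v set \<Rightarrow> ('v \<times> 'v) set" where
  "adj_outside At u v N = {(a, b). a \<notin> N \<and> b \<notin> N \<and> (\<exists>S\<in>At. {a, b} = {u S, v S})}"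

definition conn_outside :: "'r set \<Rightarrow> ('r \<Rightarrow> 'v) \<Rightarrow> ('r \<Rightarrow> 'v) \<Rightarrow> 'v set \<Rightarrow> 'v \<Rightarrow> 'v \<Rightarrow> bool" where
  "conn_outside At u v N x y \<longleftrightarrow> x \<notin> N \<and> (x, y) \<in> (adj_outside At u v N)\<^sup>*"

lemma conn_outside_notin:
  assumes "conn_outside At u v N x y"
  shows "x \<notin> N" "y \<notin> N"
  using assms unfolding conn_outside_def
  by (auto elim: rtranclE simp: adj_outside_def)

lemma conn_outside_refl: "x \<notin> N \<Longrightarrow> conn_outside At u v N x x"
  unfolding conn_outside_def by simp

lemma conn_outside_trans:
  "conn_outside At u v N x y \<Longrightarrow> conn_outside At u v N y z \<Longrightarrow> conn_outside At u v N x z"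
  unfolding conn_outside_def by auto

lemma conn_outside_sym: "conn_outside At u v N x y \<Longrightarrow> conn_outside At u v N y x"
proof -
  assume c: "conn_outside At u v N x y"
  have "sym (adj_outside At u v N)"
    unfolding adj_outside_def by (auto intro: symI simp: insert_commute)
  then have "(y, x) \<in> (adj_outside At u v N)\<^sup>*"
    using c sym_rtrancl unfolding conn_outside_def sym_def by blast
  then show ?thesis using conn_outside_notin(2)[OF c] unfolding conn_outside_def by simp
qed

lemma conn_outside_step:
  "conn_outside At u v N x y \<Longrightarrow> (y, z) \<in> adj_outside At u v N \<Longrightarrow> conn_outside At u v N x z"
  unfolding conn_outside_def by auto

lemma conn_outside_edge:
  "S \<in> At \<Longrightarrow> u S \<notin> N \<Longrightarrow> v S \<notin> N \<Longrightarrow> conn_outside At u v N (u S) (v S)"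
  unfolding conn_outside_def adj_outside_def by blast

lemma conn_outside_antimono:
  assumes "N' \<subseteq> N" "conn_outside At u v N x y"
  shows "conn_outside At u v N' x y"
proof -
  have "adj_outside At u v N \<subseteq> adj_outside At u v N'"
    using assms(1) unfolding adj_outside_def by auto
  then show ?thesis using assms rtrancl_mono unfolding conn_outside_def by blast
qed

lemma conn_outside_restrict:
  assumes c: "conn_outside At u v N x y"
    and avoid: "\<And>z. conn_outside At u v N x z \<Longrightarrow> z \<notin> N'"
  shows "conn_outside At u v N' x y"
proof -
  have "(x, y) \<in> (adj_outside At u v N)\<^sup>*" using c unfolding conn_outside_def by simp
  then have "(x, y) \<in> (adj_outside At u v N')\<^sup>*"
  proof (induction rule: rtrancl_induct)
    case (step y z)
    then have "conn_outside At u v N x y" "conn_outside At u v N x z"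
      using c conn_outside_step unfolding conn_outside_def by auto
    then have "(y, z) \<in> adj_outside At u v N'"
      using step.hyps(2) avoid unfolding adj_outside_def by auto
    then show ?case by (rule rtrancl_into_rtrancl[OF step.IH])
  qed simp
  then show ?thesis using avoid[OF conn_outside_refl[OF conn_outside_notin(1)[OF c]]]
    unfolding conn_outside_def by simp
qed

lemma conn_outside_if_rtrancl_dedges:
  assumes "(x, y) \<in> (dedges A u v)\<^sup>*" "A \<subseteq> At"
    and "\<And>z. (x, z) \<in> (dedges A u v)\<^sup>* \<Longrightarrow> (z, y) \<in> (dedges A u v)\<^sup>* \<Longrightarrow> z \<notin> N"
  shows "conn_outside At u v N x y"
  using assms
proof (induction rule: rtrancl_induct)
  case base
  then show ?case by (auto intro: conn_outside_refl)
next
  case (step y z)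
  have "conn_outside At u v N x y"
    using step.prems step.hyps(2) by (intro step.IH) (auto intro: rtrancl_into_rtrancl)
  moreover have "z \<notin> N"
    using step.prems(2) rtrancl_into_rtrancl[OF step.hyps] by blast
  moreover obtain S where "S \<in> A" "(y, z) = (u S, v S)"
    using step.hyps(2) unfolding dedges_def by blast
  ultimately have "(y, z) \<in> adj_outside At u v N"
    using step.prems(1) conn_outside_notin(2) unfolding adj_outside_def by fastforce
  then show ?case by (rule conn_outside_step[OF \<open>conn_outside At u v N x y\<close>])
qed

lemma upath_singleton: "upath At u v [a] x y \<longleftrightarrow> a = x \<and> a = y"
  unfolding upath_def by auto

lemma upath_Cons_Cons:
  "upath At u v (a # b # P) x y \<longleftrightarrow>
     a = x \<and> (\<exists>S\<in>At. {a, b} = {u S, v S}) \<and> upath At u v (b # P) b y"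
  unfolding upath_def
  by (auto simp: less_Suc_eq_0_disj) (metis Suc_less_eq length_Cons nth_Cons_Suc)

lemma conn_outside_if_upath:
  "upath At u v P x y \<Longrightarrow> set P \<inter> N = {} \<Longrightarrow> conn_outside At u v N x y"
proof (induction P arbitrary: x)
  case (Cons a P)
  show ?case
  proof (cases P)
    case Nil
    then show ?thesis using Cons.prems by (auto simp: upath_singleton intro: conn_outside_refl)
  next
    case (Cons b P')
    then have "a = x" "\<exists>S\<in>At. {a, b} = {u S, v S}" "upath At u v P b y"
      using Cons.prems(1) upath_Cons_Cons by metis+
    moreover have "conn_outside At u v N b y" using Cons.IH calculation(3) Cons.prems(2) by simp
    ultimately show ?thesis using Cons.prems(2) \<open>P = b # P'\<close>
      unfolding conn_outside_def adj_outside_def by (auto intro: converse_rtrancl_into_rtrancl)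
  qed
qed (simp add: upath_def)

lemma upath_if_conn_outside:
  assumes "conn_outside At u v N x y"
  shows "\<exists>P. upath At u v P x y \<and> set P \<inter> N = {}"
proof -
  have "(x, y) \<in> (adj_outside At u v N)\<^sup>*" "x \<notin> N"
    using assms unfolding conn_outside_def by simp_all
  then show ?thesis
  proof (induction rule: converse_rtrancl_induct)
    case base
    then show ?case by (intro exI[of _ "[y]"]) (simp add: upath_singleton)
  next
    case (step x z)
    then obtain P where P: "upath At u v P z y" "set P \<inter> N = {}"
      unfolding adj_outside_def by blast
    then obtain P' where "P = z # P'" unfolding upath_def by (cases P) auto
    then have "upath At u v (x # P) x y" "set (x # P) \<inter> N = {}"
      using P step.hyps(1) step.prems upath_Cons_Cons[of At u v x z P' x y]
      unfolding adj_outside_def by auto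
    then show ?case by blast
  qed
qed

lemma rtrancl_dedges_mono:
  assumes "A \<subseteq> B" "(x, y) \<in> (dedges A u v)\<^sup>*"
  shows "(x, y) \<in> (dedges B u v)\<^sup>*"
proof -
  have "dedges A u v \<subseteq> dedges B u v" using assms(1) unfolding dedges_def by blast
  then show ?thesis using assms(2) rtrancl_mono by blast
qed

lemma rtrancl_dedges_split:
  assumes "(x, y) \<in> (dedges A u v)\<^sup>*" "A \<subseteq> insert R B"
  shows "(x, y) \<in> (dedges B u v)\<^sup>* \<or>
         (x, u R) \<in> (dedges A u v)\<^sup>* \<and> (v R, y) \<in> (dedges B u v)\<^sup>*"
proof -
  let ?G = "dedges A u v - {(u R, v R)}"
  have "?G \<subseteq> dedges B u v" using assms(2) unfolding dedges_def by blast
  then have GB: "?G\<^sup>* \<subseteq> (dedges B u v)\<^sup>*" by (rule rtrancl_mono)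
  have GA: "?G\<^sup>* \<subseteq> (dedges A u v)\<^sup>*" by (rule rtrancl_mono) blast
  have "dedges A u v \<subseteq> insert (u R, v R) ?G" by blast
  then have "(x, y) \<in> (insert (u R, v R) ?G)\<^sup>*" using assms(1) rtrancl_mono by blast
  then consider "(x, y) \<in> ?G\<^sup>*" | "(x, u R) \<in> ?G\<^sup>*" "(v R, y) \<in> ?G\<^sup>*"
    unfolding rtrancl_insert by blast
  then show ?thesis using GA GB by cases auto
qed

lemma mem_reachR_iff: "y \<in> reachR At u v R \<longleftrightarrow> (u R, y) \<in> (dedges (At - {R}) u v)\<^sup>*"
  by (simp add: reachR_def reach_def)

lemma sim_iff: "sim At u v R S \<longleftrightarrow> (u R, u S) \<in> (dedges At u v)\<^sup>* \<and> (u S, u R) \<in> (dedges At u v)\<^sup>*"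
  by (simp add: sim_def reach_def)

lemma sim_sym: "sim At u v R S \<Longrightarrow> sim At u v S R"
  by (simp add: sim_def)

lemma sim_trans: "sim At u v R S \<Longrightarrow> sim At u v S T \<Longrightarrow> sim At u v R T"
  unfolding sim_iff by (auto intro: rtrancl_trans)

lemma Eqs_member:
  assumes "C \<in> Eqs At u v Inc" "S \<in> C"
  shows "S \<in> Inc" "C = eqclass At u v Inc S"
proof -
  obtain R where R: "R \<in> Inc" "C = eqclass At u v Inc R" using assms(1) unfolding Eqs_def by blast
  then have RS: "sim At u v R S" "S \<in> Inc" using assms(2) unfolding eqclass_def by auto
  then show "S \<in> Inc" by simp
  have "sim At u v R S' \<longleftrightarrow> sim At u v S S'" for S'
    using RS(1) sim_sym sim_trans by meson
  then show "C = eqclass At u v Inc S" using R(2) unfolding eqclass_def by simp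
qed

lemma Eqs_sim:
  assumes "C \<in> Eqs At u v Inc" "S \<in> C" "S' \<in> C"
  shows "sim At u v S S'"
  using assms(3) unfolding Eqs_member(2)[OF assms(1,2)] eqclass_def by simp

lemma Eqs_not_sim:
  assumes "C \<in> Eqs At u v Inc" "C' \<in> Eqs At u v Inc" "C \<noteq> C'" "S \<in> C" "S' \<in> C'"
  shows "\<not> sim At u v S S'"
proof
  assume "sim At u v S S'"
  then have "sim At u v S T \<longleftrightarrow> sim At u v S' T" for T
    using sim_sym sim_trans by meson
  then have "eqclass At u v Inc S = eqclass At u v Inc S'"
    unfolding eqclass_def by simp
  then show False using assms(3) Eqs_member(2)[OF assms(1,4)] Eqs_member(2)[OF assms(2,5)] by simp
qed

subsection \<open>From coupled classes to coupled atoms\<close>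

lemma conn_reachR_if_notin_Cplus:
  assumes C: "C \<in> Eqs At u v Inc" and R: "R \<in> C"
    and z: "z \<in> reachR At u v R" "z \<notin> Cplus At u v C"
  shows "\<exists>R'\<in>C. conn_outside At u v (reachR At u v R') (v R') z"
proof -
  obtain R' where R': "R' \<in> C" "z \<notin> reachR At u v R'" using z(2) unfolding Cplus_def by blast
  let ?E' = "dedges (At - {R'}) u v"
  have "(u R', u R) \<in> (dedges At u v)\<^sup>*" using Eqs_sim[OF C R' (1) R] unfolding sim_iff by simp
  moreover have "(u R, z) \<in> (dedges At u v)\<^sup>*"
    using rtrancl_dedges_mono[OF Diff_subset z(1)[unfolded mem_reachR_iff]] .
  ultimately have "(u R', z) \<in> (dedges At u v)\<^sup>*" by (rule rtrancl_trans)
  moreover have not_reach: "(u R', z) \<notin> ?E'\<^sup>*" using R'(2) unfolding mem_reachR_iff .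
  ultimately have "(v R', z) \<in> ?E'\<^sup>*" using rtrancl_dedges_split[of _ _ At u v R' "At - {R'}"] by blast
  then have "conn_outside At u v (reachR At u v R') (v R') z"
    using not_reach rtrancl_trans[of "u R'" _ ?E' z]
    by (intro conn_outside_if_rtrancl_dedges) (auto simp: mem_reachR_iff)
  then show ?thesis using R'(1) by blast
qed

lemma conn_reachR_if_conn_Cplus:
  assumes C: "C \<in> Eqs At u v Inc" and R: "R \<in> C"
    and c: "conn_outside At u v (Cplus At u v C) (v R) y"
  shows "\<exists>R'\<in>C. conn_outside At u v (reachR At u v R') (v R') y"
proof -
  have "(v R, y) \<in> (adj_outside At u v (Cplus At u v C))\<^sup>*" using c unfolding conn_outside_def by simp
  then show ?thesis
  proof (induction rule: rtrancl_induct)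
    case base
    show ?case
    proof (cases "\<exists>R1\<in>C. v R \<in> reachR At u v R1")
      case True
      then show ?thesis using conn_reachR_if_notin_Cplus[OF C] conn_outside_notin(1)[OF c] by blast
    next
      case False
      then show ?thesis using R by (blast intro: conn_outside_refl)
    qed
  next
    case (step y z)
    have z: "z \<notin> Cplus At u v C" using step.hyps(2) unfolding adj_outside_def by simp
    show ?case
    proof (cases "\<exists>R1\<in>C. z \<in> reachR At u v R1")
      case True
      then show ?thesis using conn_reachR_if_notin_Cplus[OF C _ _ z] by blast
    next
      case False
      obtain R' where R': "R' \<in> C" "conn_outside At u v (reachR At u v R') (v R') y"
        using step.IH by blast
      have "(y, z) \<in> adj_outside At u v (reachR At u v R')"
        using step.hyps(2) False R'(1) conn_outside_notin(2)[OF R'(2)] unfolding adj_outside_def by auto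
      then show ?thesis using R'(1) conn_outside_step[OF R'(2)] by blast
    qed
  qed
qed

text \<open>A directed cycle through \<open>u\<^sub>S\<close> that meets \<open>N\<^sub>R\<close> leads back to \<open>u\<^sub>S\<close> either inside
  \<open>G - e\<^sub>R\<close>, placing \<open>u\<^sub>S\<close> in \<open>N\<^sub>R\<close>, or through \<open>u\<^sub>R\<close>, making \<open>R \<sim> S\<close>.\<close>

lemma conn_reachR_move_target:
  assumes c: "conn_outside At u v (reachR At u v R) (v R) (u S)"
    and sim: "sim At u v S S'" and not_sim: "\<not> sim At u v R S"
  shows "conn_outside At u v (reachR At u v R) (v R) (u S')"
proof -
  let ?E = "dedges At u v" and ?E' = "dedges (At - {R}) u v"
  have uS: "(u R, u S) \<notin> ?E'\<^sup>*"
    using conn_outside_notin(2)[OF c] unfolding mem_reachR_iff .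
  have cycle: "(u S, u S') \<in> ?E\<^sup>*" "(u S', u S) \<in> ?E\<^sup>*" using sim unfolding sim_iff by auto
  have avoid: "z \<notin> reachR At u v R" if z: "(u S, z) \<in> ?E\<^sup>*" "(z, u S') \<in> ?E\<^sup>*" for z
  proof
    assume "z \<in> reachR At u v R"
    then have Rz: "(u R, z) \<in> ?E'\<^sup>*" unfolding mem_reachR_iff .
    have zS: "(z, u S) \<in> ?E\<^sup>*" using z(2) cycle(2) by (rule rtrancl_trans)
    have "At \<subseteq> insert R (At - {R})" by blast
    from rtrancl_dedges_split[OF zS this]
    consider "(z, u S) \<in> ?E'\<^sup>*" | "(z, u R) \<in> ?E\<^sup>*" by blast
    then show False
    proof cases
      case 1
      then show False using uS rtrancl_trans[OF Rz] by blast
    next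
      case 2
      have "(u R, u S) \<in> ?E\<^sup>*"
        using rtrancl_trans[OF rtrancl_dedges_mono[OF Diff_subset Rz] zS] .
      moreover have "(u S, u R) \<in> ?E\<^sup>*" using z(1) 2 by (rule rtrancl_trans)
      ultimately show False using not_sim unfolding sim_iff by simp
    qed
  qed
  have "conn_outside At u v (reachR At u v R) (u S) (u S')"
    using conn_outside_if_rtrancl_dedges[OF cycle(1) subset_refl avoid] .
  then show ?thesis by (rule conn_outside_trans[OF c])
qed

lemma coupledC_imp_conn_reachR:
  assumes C: "C \<in> Eqs At u v Inc" and X: "X \<in> coupledC At u v Inc C" "X \<noteq> C"
  shows "\<exists>R\<in>C. \<exists>S\<in>X. conn_outside At u v (reachR At u v R) (v R) (u S)"
proof -
  have "\<exists>R\<in>C. \<exists>S\<in>X. \<exists>P. upath At u v P (v R) (u S) \<and> set P \<inter> Cplus At u v C = {}"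
    using X unfolding coupledC_def by simp
  then obtain R S P where RS: "R \<in> C" "S \<in> X"
    and P: "upath At u v P (v R) (u S)" "set P \<inter> Cplus At u v C = {}"
    by blast
  obtain R' where "R' \<in> C" "conn_outside At u v (reachR At u v R') (v R') (u S)"
    using conn_reachR_if_conn_Cplus[OF C RS(1) conn_outside_if_upath[OF P]] by blast
  then show ?thesis using RS(2) by blast
qed

lemma coupledC_if_conn_Cplus:
  assumes "X \<in> Eqs At u v Inc" "R \<in> C" "S \<in> X"
    and "conn_outside At u v (Cplus At u v C) (v R) (u S)"
  shows "X \<in> coupledC At u v Inc C"
proof -
  obtain P where "upath At u v P (v R) (u S)" "set P \<inter> Cplus At u v C = {}"
    using upath_if_conn_outside[OF assms(4)] by blast
  then have "\<exists>R\<in>C. \<exists>S\<in>X. \<exists>P. upath At u v P (v R) (u S) \<and> set P \<inter> Cplus At u v C = {}"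
    using assms(2,3) by blast
  then show ?thesis using assms(1) unfolding coupledC_def by simp
qed

lemma coupled_if_conn_reachR:
  assumes "S \<in> Inc" "conn_outside At u v (reachR At u v R) (v R) (u S)"
  shows "S \<in> coupled At u v Inc R"
proof -
  obtain P where "upath At u v P (v R) (u S)" "set P \<inter> reachR At u v R = {}"
    using upath_if_conn_outside[OF assms(2)] by blast
  then show ?thesis using assms(1) unfolding coupled_def by blast
qed

lemma splittable_not_conn_reachR_both:
  assumes "splittable At u v Inc" "R \<in> Inc" "S \<in> Inc" "\<not> sim At u v R S"
    and "conn_outside At u v (reachR At u v R) (v R) (u S)"
    and "conn_outside At u v (reachR At u v S) (v S) (u R)"
  shows False
proof -
  have "S \<in> coupled At u v Inc R" by (rule coupled_if_conn_reachR[OF assms(3,5)])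
  moreover have "R \<in> coupled At u v Inc S" by (rule coupled_if_conn_reachR[OF assms(2,6)])
  ultimately show False using assms(1-4) unfolding splittable_def by blast
qed

lemma conn_reachR_shift:
  assumes sp: "splittable At u v Inc" and I: "R0 \<in> Inc" "R1 \<in> Inc" and not_sim: "\<not> sim At u v R0 R1"
    and c0: "conn_outside At u v (reachR At u v R0) (v R0) (u R1)"
    and c1: "conn_outside At u v (reachR At u v R1) (v R1) y"
  shows "conn_outside At u v (reachR At u v R0) (v R1) y"
  using c1
proof (rule conn_outside_restrict)
  let ?N0 = "reachR At u v R0" and ?N1 = "reachR At u v R1"
  let ?E0 = "dedges (At - {R0}) u v" and ?E1 = "dedges (At - {R1}) u v"
  fix w assume w: "conn_outside At u v ?N1 (v R1) w"
  show "w \<notin> ?N0"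
  proof
    assume "w \<in> ?N0"
    then have path: "(u R0, w) \<in> ?E0\<^sup>*" unfolding mem_reachR_iff .
    have avoid: "z \<notin> ?N1" if z: "(u R0, z) \<in> ?E0\<^sup>*" "(z, w) \<in> ?E0\<^sup>*" for z
    proof
      assume "z \<in> ?N1"
      have "At - {R0} \<subseteq> insert R1 (At - {R1})" by blast
      from rtrancl_dedges_split[OF z(2) this]
      consider "(z, w) \<in> ?E1\<^sup>*" | "(z, u R1) \<in> ?E0\<^sup>*" by blast
      then show False
      proof cases
        case 1
        have "(u R1, w) \<in> ?E1\<^sup>*"
          using \<open>z \<in> ?N1\<close> 1 unfolding mem_reachR_iff by (rule rtrancl_trans)
        then have "w \<in> ?N1" unfolding mem_reachR_iff .
        then show False using conn_outside_notin(2)[OF w] by simp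
      next
        case 2
        have "u R1 \<in> ?N0" using rtrancl_trans[OF z(1) 2] unfolding mem_reachR_iff .
        with conn_outside_notin(2)[OF c0] show False by contradiction
      qed
    qed
    have "conn_outside At u v ?N1 (u R0) w"
      using conn_outside_if_rtrancl_dedges[OF path Diff_subset avoid] .
    then have "conn_outside At u v ?N1 (v R1) (u R0)"
      by (rule conn_outside_trans[OF w conn_outside_sym])
    then show False by (rule splittable_not_conn_reachR_both[OF sp I not_sim c0])
  qed
qed

subsection \<open>Asymmetry and monotonicity of class coupling\<close>

lemma coupledC_asym:
  assumes sp: "splittable At u v Inc"
    and C1: "C1 \<in> Eqs At u v Inc" and C2: "C2 \<in> Eqs At u v Inc" and ne: "C1 \<noteq> C2"
    and a: "C1 \<in> coupledC At u v Inc C2"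
  shows "C2 \<notin> coupledC At u v Inc C1"
proof
  assume b: "C2 \<in> coupledC At u v Inc C1"
  have ne': "C2 \<noteq> C1" using ne by simp
  obtain R0 S where A: "R0 \<in> C2" "S \<in> C1" "conn_outside At u v (reachR At u v R0) (v R0) (u S)"
    using coupledC_imp_conn_reachR[OF C2 a ne] by blast
  obtain R1 T where B: "R1 \<in> C1" "T \<in> C2" "conn_outside At u v (reachR At u v R1) (v R1) (u T)"
    using coupledC_imp_conn_reachR[OF C1 b ne'] by blast
  have "conn_outside At u v (reachR At u v R0) (v R0) (u R1)"
    by (rule conn_reachR_move_target[OF A(3) Eqs_sim[OF C1 A(2) B(1)] Eqs_not_sim[OF C2 C1 ne' A(1,2)]])
  moreover have "conn_outside At u v (reachR At u v R1) (v R1) (u R0)"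
    by (rule conn_reachR_move_target[OF B(3) Eqs_sim[OF C2 B(2) A(1)] Eqs_not_sim[OF C1 C2 ne B(1,2)]])
  ultimately show False
    by (rule splittable_not_conn_reachR_both[OF sp Eqs_member(1)[OF C2 A(1)] Eqs_member(1)[OF C1 B(1)]
          Eqs_not_sim[OF C2 C1 ne' A(1) B(1)]])
qed

lemma coupledC_subset:
  assumes q: "query_graph At u v Inc" and sp: "splittable At u v Inc"
    and C1: "C1 \<in> Eqs At u v Inc" and C2: "C2 \<in> Eqs At u v Inc" and ne: "C1 \<noteq> C2"
    and a: "C1 \<in> coupledC At u v Inc C2"
  shows "coupledC At u v Inc C1 \<subseteq> coupledC At u v Inc C2"
proof
  fix X assume X: "X \<in> coupledC At u v Inc C1"
  show "X \<in> coupledC At u v Inc C2"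
  proof (cases "X = C1")
    case True
    then show ?thesis using a by simp
  next
    case False
    then have XE: "X \<in> Eqs At u v Inc" using X unfolding coupledC_def by simp
    have ne': "C2 \<noteq> C1" using ne by simp
    obtain R0 S where A: "R0 \<in> C2" "S \<in> C1" "conn_outside At u v (reachR At u v R0) (v R0) (u S)"
      using coupledC_imp_conn_reachR[OF C2 a ne] by blast
    obtain R1 T where B: "R1 \<in> C1" "T \<in> X" "conn_outside At u v (reachR At u v R1) (v R1) (u T)"
      using coupledC_imp_conn_reachR[OF C1 X False] by blast
    have R1: "R1 \<in> Inc" "R1 \<in> At"
      using Eqs_member(1)[OF C1 B(1)] q unfolding query_graph_def by blast+
    have c0: "conn_outside At u v (reachR At u v R0) (v R0) (u R1)"
      by (rule conn_reachR_move_target[OF A(3) Eqs_sim[OF C1 A(2) B(1)] Eqs_not_sim[OF C2 C1 ne' A(1,2)]])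
    have c1: "conn_outside At u v (reachR At u v R0) (v R1) (u T)"
      by (rule conn_reachR_shift[OF sp Eqs_member(1)[OF C2 A(1)] R1(1)
            Eqs_not_sim[OF C2 C1 ne' A(1) B(1)] c0 B(3)])
    have "conn_outside At u v (reachR At u v R0) (u R1) (v R1)"
      by (rule conn_outside_edge[where u = u and v = v, OF R1(2) conn_outside_notin(2)[OF c0] conn_outside_notin(1)[OF c1]])
    then have "conn_outside At u v (reachR At u v R0) (v R0) (u T)"
      by (rule conn_outside_trans[OF conn_outside_trans[OF c0] c1])
    moreover have "Cplus At u v C2 \<subseteq> reachR At u v R0"
      unfolding Cplus_def by (rule INT_lower[OF A(1)])
    ultimately have "conn_outside At u v (Cplus At u v C2) (v R0) (u T)"
      by (rule conn_outside_antimono[rotated])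
    then show ?thesis by (rule coupledC_if_conn_Cplus[OF XE A(1) B(2)])
  qed
qed

theorem proposition5p6:
  fixes At Inc :: "'r set" and u v :: "'r \<Rightarrow> 'v" and C1 C2 :: "'r set"
  assumes "query_graph At u v Inc"
    and "splittable At u v Inc"
    and "C1 \<in> Eqs At u v Inc" and "C2 \<in> Eqs At u v Inc" and "C1 \<noteq> C2"
  shows "(C1 \<notin> coupledC At u v Inc C2 \<or> C2 \<notin> coupledC At u v Inc C1) \<and>
         (C1 \<in> coupledC At u v Inc C2 \<longrightarrow> coupledC At u v Inc C1 \<subset> coupledC At u v Inc C2)"
proof (intro conjI impI)
  show "C1 \<notin> coupledC At u v Inc C2 \<or> C2 \<notin> coupledC At u v Inc C1"
    using coupledC_asym[OF assms(2-5)] by blast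
  assume a: "C1 \<in> coupledC At u v Inc C2"
  have "C2 \<in> coupledC At u v Inc C2" "C2 \<notin> coupledC At u v Inc C1"
    using coupledC_asym[OF assms(2-5) a] unfolding coupledC_def by auto
  then show "coupledC At u v Inc C1 \<subset> coupledC At u v Inc C2"
    using coupledC_subset[OF assms a] by blast
qed

end
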